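(* Assume (A1), (A2) and (A3). Then for Method (BCV): (i) the number of changes of the inner index $k$ at each stage $l$ is finite (so the sequence $\{z^l\}_{l\ge0}$ is well defined); (ii) the sequence $\{z^l\}$ has limit points, and every limit point $\bar z$ belongs to $D$ and solves the variational inequality: there exists $\bar g\in\partial^{\uparrow}f(\bar z)$ with $\langle\bar g,x-\bar z\rangle\ge0$ for all $x\in D$; (iii) if in addition $f$ is semi-convex on $X$, then $\lim_{l\to\infty}f(z^l)=f^*$ and every limit point of $\{z^l\}$ belongs to $D^*$.
   Context: Setting: limit problem $\min_{x\in D}f(x)$ with $D=\{x\in X:\langle a,x\rangle=\beta\}$, $X=\prod_{i=1}^n[\alpha'_i,\alpha''_i]$; $f^*=\inf_{x\in D}f(x)$ and $D^*$ is its solution set. Approximating problems $\min_{x\in D_l}f_l(x)$, $l=0,1,2,\dots$, with $D_l=\{x\in X_l:\langle a^l,x\rangle=\beta_l\}$, $X_l=\prod_{i=1}^n[\alpha'_{il},\alpha''_{il}]$, $a^l=(a_{1l},\dots,a_{nl})^\top$. (A1): $D\ne\varnothing$, $X$ bounded, $a_i>0$ for all $i\in I=\{1,\dots,n\}$, and $f:\mathbb{R}^n\to\mathbb{R}$ is Lipschitz continuous in a neighborhood of every point of $X$. (A2): for each $l$, $D_l\neq\varnothing$, $a_{il}>0$ and $-\infty<\alpha'_{il}<\alpha''_{il}<+\infty$ for all $i$; and $\alpha'_{il}\to\alpha'_i$, $\alpha''_{il}\to\alpha''_i$, $a^l\to a$, $\beta_l\to\beta$ as $l\to\infty$. (A3):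 each $f_l$ is continuously differentiable on (a neighborhood of) $X_l$, and whenever $y^l\in D_l$ and $y^l\to\bar y$, the gradients satisfy $\nabla f_l(y^l)\to\bar g$ for some $\bar g\in\partial^{\uparrow}f(\bar y)$. Clarke notions: $f^{\uparrow}(x;p)=\limsup_{y\to x,\ \alpha\searrow0}(f(y+\alpha p)-f(y))/\alpha$ and $\partial^{\uparrow}f(x)=\{g:\langle g,p\rangle\le f^{\uparrow}(x;p)\ \forall p\}$. $f$ is semi-convex on $X$ if for all $x,y\in X$, $f^{\uparrow}(x;y-x)\ge0$ implies $f(y)\ge f(x)$. Notation: $g_{il}(x)=\partial f_l(x)/\partial x_i$, $h_{il}(x)=g_{il}(x)/a_{il}$; given positive sequence $\{\varepsilon_l\}$, $I_l^-(x)=\{i\in I: x_i\ge\alpha'_{il}+\varepsilon_l/a_{il}\}$, $I_l^+(x)=\{i\in I: x_i\le\alpha''_{il}-\varepsilon_l/a_{il}\}$; $\pi_V$ is Euclidean projection onto $V$. Method (BCV): choose $z^0\in D_0$, $\sigma\in(0,1)$, $\theta\in(0,1)$, positive sequences $\delta_l\searrow0$, $\varepsilon_l\searrow0$; set $l=1$. Stage $l$: set $k=0$, $x^0=\pi_{D_l}(z^{l-1})$. Step 1: if there exist $i\in I_l^-(x^k)$, $j\in I_l^+(x^k)$ with $h_{il}(x^k)-h_{jl}(x^k)\ge\delta_l$, choose any such pair, set $i_k=i$, $j_k=j$, $\gamma_k=\min\{a_{il}(x^k_i-\alpha'_{il}),\,a_{jl}(\alpha''_{jl}-x^k_j)\}$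 and go to Step 2; otherwise set $z^l=x^k$, $l:=l+1$ and start the next stage. Step 2: define $d^k$ by $d^k_i=-1/a_{il}$, $d^k_j=1/a_{jl}$, $d^k_s=0$ for $s\ne i,j$; let $m$ be the smallest nonnegative integer with $f_l(x^k+\theta^m\gamma_kd^k)\le f_l(x^k)+\sigma\theta^m\gamma_k\langle\nabla f_l(x^k),d^k\rangle$; set $\lambda_k=\theta^m\gamma_k$, $x^{k+1}=x^k+\lambda_kd^k$, $k:=k+1$, and return to Step 1. *)

theory Defs
  imports "HOL-Analysis.Analysis" "HOL-Library.Liminf_Limsup"
begin

definition clarke_dd :: "('a::real_normed_vector \<Rightarrow> real) \<Rightarrow> 'a \<Rightarrow> 'a \<Rightarrow> ereal" where
  "clarke_dd f x p =
     Limsup (at (x, 0) within (UNIV \<times> {0<..}))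
            (\<lambda>(y, \<alpha>::real). ereal ((f (y + \<alpha> *\<^sub>R p) - f y) / \<alpha>))"

definition clarke_subdiff :: "('a::real_inner \<Rightarrow> real) \<Rightarrow> 'a \<Rightarrow> 'a set" where
  "clarke_subdiff f x = {g. \<forall>p. ereal (inner g p) \<le> clarke_dd f x p}"

definition semiconvex_on :: "('a::real_inner \<Rightarrow> real) \<Rightarrow> 'a set \<Rightarrow> bool" where
  "semiconvex_on f X \<longleftrightarrow>
     (\<forall>x\<in>X. \<forall>y\<in>X. clarke_dd f x (y - x) \<ge> 0 \<longrightarrow> f y \<ge> f x)"

definition boxset :: "real^'n \<Rightarrow> real^'n \<Rightarrow> (real^'n) set" where
  "boxset lo hi = {x. \<forall>i. lo$i \<le> x$i \<and> x$i \<le> hi$i}"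

definition feas :: "real^'n \<Rightarrow> real^'n \<Rightarrow> real^'n \<Rightarrow> real \<Rightarrow> (real^'n) set" where
  "feas lo hi a b = {x \<in> boxset lo hi. inner a x = b}"

definition Iminus :: "real^'n \<Rightarrow> real^'n \<Rightarrow> real \<Rightarrow> real^'n \<Rightarrow> 'n set" where
  "Iminus lo a eps x = {i. x$i \<ge> lo$i + eps / a$i}"

definition Iplus :: "real^'n \<Rightarrow> real^'n \<Rightarrow> real \<Rightarrow> real^'n \<Rightarrow> 'n set" where
  "Iplus hi a eps x = {i. x$i \<le> hi$i - eps / a$i}"

definition bcv_pair :: "real^'n \<Rightarrow> real^'n \<Rightarrow> real^'n \<Rightarrow> (real^'n \<Rightarrow> real^'n)
    \<Rightarrow> real \<Rightarrow> real \<Rightarrow> real^'n \<Rightarrow> 'n \<Rightarrow> 'n \<Rightarrow> bool" where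
  "bcv_pair lo hi a g eps del x i j \<longleftrightarrow>
     i \<in> Iminus lo a eps x \<and> j \<in> Iplus hi a eps x \<and>
     (g x)$i / a$i - (g x)$j / a$j \<ge> del"

definition bcv_stop :: "real^'n \<Rightarrow> real^'n \<Rightarrow> real^'n \<Rightarrow> (real^'n \<Rightarrow> real^'n)
    \<Rightarrow> real \<Rightarrow> real \<Rightarrow> real^'n \<Rightarrow> bool" where
  "bcv_stop lo hi a g eps del x \<longleftrightarrow> \<not> (\<exists>i j. bcv_pair lo hi a g eps del x i j)"

text \<open>Parameters: lo, hi, a = bounds and coefficient vector of D_l; fl = f_l; g = gradient of f_l;
  eps = eps_l; del = delta_l; sig = sigma; th = theta.\<close>
definition bcv_step :: "real^'n \<Rightarrow> real^'n \<Rightarrow> real^'n \<Rightarrow> (real^'n \<Rightarrow> real) \<Rightarrow> (real^'n \<Rightarrow> real^'n)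
    \<Rightarrow> real \<Rightarrow> real \<Rightarrow> real \<Rightarrow> real \<Rightarrow> real^'n \<Rightarrow> real^'n \<Rightarrow> bool" where
  "bcv_step lo hi a fl g eps del sig th x x' \<longleftrightarrow>
     (\<exists>i j. bcv_pair lo hi a g eps del x i j \<and>
        (let \<gamma> = min (a$i * (x$i - lo$i)) (a$j * (hi$j - x$j));
             d = (\<chi> s. if s = i then - 1 / a$i else if s = j then 1 / a$j else 0) :: real^'n;
             arm = (\<lambda>m::nat. fl (x + (th ^ m * \<gamma>) *\<^sub>R d) \<le> fl x + sig * th ^ m * \<gamma> * inner (g x) d)
         in \<exists>m. arm m \<and> (\<forall>m'<m. \<not> arm m') \<and> x' = x + (th ^ m * \<gamma>) *\<^sub>R d))"

end

theory Submission
  imports Defs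
begin

text \<open>Within a stage every accepted step keeps the iterate in the compact set \<open>D\<^sub>l\<close>, and by
  uniform continuity of \<open>\<nabla>f\<^sub>l\<close> on the box a failed Armijo test can only happen at step lengths
  bounded below; hence each step decreases \<open>f\<^sub>l\<close> by a fixed amount and a stage stops after
  finitely many steps. At the end of stage \<open>l\<close> no pair \<open>i \<in> I\<^sub>l\<^sup>-\<close>, \<open>j \<in> I\<^sub>l\<^sup>+\<close> has
  \<open>h\<^sub>i\<^sub>l - h\<^sub>j\<^sub>l \<ge> \<delta>\<^sub>l\<close>. Along a convergent subsequence the gradients tend to a Clarke
  subgradient \<open>g\<close> (by (A3)), and since \<open>\<epsilon>\<^sub>l, \<delta>\<^sub>l \<rightarrow> 0\<close> the limit satisfies
  \<open>g\<^sub>i/a\<^sub>i \<le> g\<^sub>j/a\<^sub>j\<close> whenever \<open>z\<^sub>i\<close> is above its lower bound and \<open>z\<^sub>j\<close> below its upper bound.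
  These are the optimality conditions of the linear program \<open>min \<langle>g, x\<rangle>\<close> over \<open>D\<close>, i.e. the
  variational inequality. Under semi-convexity its solutions are minimisers, and
  \<open>f(z\<^sup>l) \<rightarrow> f\<^sup>*\<close> because every subsequence has a further subsequence converging to one.\<close>

section \<open>Positive weights, subsequences and semi-convexity\<close>

lemma inner_mono_cart:
  fixes u v w :: "real^'n"
  assumes "\<And>i. u$i \<le> v$i" "\<And>i. 0 < w$i"
  shows "inner w u \<le> inner w v"
  unfolding inner_vec_def using assms by (intro sum_mono) (simp add: less_imp_le mult_left_mono)

lemma norm_le_inner_sum_inverse:
  fixes v w :: "real^'n"
  assumes "\<And>i. 0 \<le> v$i" "\<And>i. 0 < w$i"
  shows "norm v \<le> inner w v * (\<Sum>i\<in>UNIV. 1 / w$i)"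
proof -
  have "norm v \<le> (\<Sum>i\<in>UNIV. \<bar>v$i\<bar>)" by (rule norm_le_l1_cart)
  also have "\<dots> \<le> (\<Sum>i\<in>UNIV. inner w v * (1 / w$i))"
  proof (intro sum_mono)
    fix i
    have "w$i * v$i \<le> (\<Sum>j\<in>UNIV. w$j * v$j)"
      using assms by (intro member_le_sum) (auto intro: mult_nonneg_nonneg less_imp_le)
    thus "\<bar>v$i\<bar> \<le> inner w v * (1 / w$i)" using assms[of i]
      by (simp add: inner_vec_def pos_le_divide_eq mult.commute)
  qed
  also have "\<dots> = inner w v * (\<Sum>i\<in>UNIV. 1 / w$i)" by (simp add: sum_distrib_left)
  finally show ?thesis .
qed

lemma norm_le_abs_inner_sum_inverse:
  fixes v w :: "real^'n"
  assumes "(\<forall>i. 0 \<le> v$i) \<or> (\<forall>i. v$i \<le> 0)" "\<And>i. 0 < w$i"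
  shows "norm v \<le> \<bar>inner w v\<bar> * (\<Sum>i\<in>UNIV. 1 / w$i)"
  using assms(1)
proof
  assume v: "\<forall>i. 0 \<le> v$i"
  hence "0 \<le> inner w v" using inner_mono_cart[of 0 v w] assms(2) by simp
  thus ?thesis using norm_le_inner_sum_inverse[of v w] v assms(2) by simp
next
  assume "\<forall>i. v$i \<le> 0"
  hence v: "\<forall>i. 0 \<le> (- v)$i" by simp
  hence "0 \<le> inner w (- v)" using inner_mono_cart[of 0 "- v" w] assms(2) by simp
  thus ?thesis using norm_le_inner_sum_inverse[of "- v" w] v assms(2) by simp
qed

lemma eq_if_le_and_inner_eq:
  fixes x y a :: "real^'n"
  assumes "\<And>i. x$i \<le> y$i" "\<And>i. 0 < a$i" "inner a x = inner a y"
  shows "x = y"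
proof -
  have "(\<Sum>i\<in>UNIV. a$i * (y$i - x$i)) = 0"
    using assms(3) by (simp add: inner_vec_def sum_subtractf algebra_simps)
  moreover have "0 \<le> a$i * (y$i - x$i)" for i using assms(1,2)[of i] by simp
  ultimately have "a$i * (y$i - x$i) = 0" for i by (simp add: sum_nonneg_eq_0_iff)
  hence "y$i - x$i = 0" for i using assms(2)[of i] by (metis less_irrefl mult_eq_0_iff)
  thus ?thesis by (simp add: vec_eq_iff)
qed

lemma LIMSEQ_splice_subseq:
  fixes z w :: "nat \<Rightarrow> 'a::metric_space"
  assumes r: "strict_mono r" and zr: "(z \<circ> r) \<longlonglongrightarrow> L" and w: "w \<longlonglongrightarrow> L"
  shows "(\<lambda>l. if l \<in> range r then z l else w l) \<longlonglongrightarrow> L"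
proof (rule tendstoI)
  fix e :: real assume "e > 0"
  then obtain K N where K: "\<And>k. K \<le> k \<Longrightarrow> dist (z (r k)) L < e"
    and N: "\<And>n. N \<le> n \<Longrightarrow> dist (w n) L < e"
    using zr w by (force simp: lim_sequentially)
  have "dist (if n \<in> range r then z n else w n) L < e" if n: "max N (r K) \<le> n" for n
  proof (cases "n \<in> range r")
    case True
    then obtain k where k: "n = r k" by auto
    with n have "K \<le> k" using strict_mono_less_eq[OF r] by simp
    thus ?thesis using K k by simp
  qed (use N n in auto)
  thus "\<forall>\<^sub>F n in sequentially. dist (if n \<in> range r then z n else w n) L < e"
    by (rule eventually_sequentiallyI)
qed

lemma tendsto_of_subseq_limits:
  fixes z :: "nat \<Rightarrow> 'a::heine_borel" and f :: "'a \<Rightarrow> 'b::metric_space"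
  assumes bdd: "bounded (range z)"
    and lim: "\<And>zb r. strict_mono r \<Longrightarrow> (z \<circ> r) \<longlonglongrightarrow> zb \<Longrightarrow> isCont f zb \<and> f zb = c"
  shows "(\<lambda>l. f (z l)) \<longlonglongrightarrow> c"
proof (rule ccontr)
  assume "\<not> (\<lambda>l. f (z l)) \<longlonglongrightarrow> c"
  then obtain e where e: "e > 0" and "\<not> (\<forall>\<^sub>F l in sequentially. dist (f (z l)) c < e)"
    unfolding tendsto_iff by blast
  hence "infinite {l. \<not> dist (f (z l)) c < e}"
    unfolding cofinite_eq_sequentially[symmetric] eventually_cofinite by blast
  then obtain r :: "nat \<Rightarrow> nat" where r: "strict_mono r" and far: "\<And>n. \<not> dist (f (z (r n))) c < e"
    using infinite_enumerate by blast
  have "bounded (range (z \<circ> r))" using bdd by (rule bounded_subset) auto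
  then obtain zb r' where r': "strict_mono r'" and "((z \<circ> r) \<circ> r') \<longlonglongrightarrow> zb"
    using bounded_imp_convergent_subsequence by blast
  hence zr: "(z \<circ> (r \<circ> r')) \<longlonglongrightarrow> zb" by (simp add: o_assoc)
  with lim[OF strict_mono_o[OF r r']] have "(\<lambda>k. f ((z \<circ> (r \<circ> r')) k)) \<longlonglongrightarrow> c"
    using isCont_tendsto_compose by metis
  then obtain k where "dist (f (z (r (r' k)))) c < e"
    using e unfolding tendsto_iff by (auto simp: eventually_sequentially)
  with far show False by blast
qed

lemma isCont_if_lipschitz_on_ball:
  assumes "0 < e" "L-lipschitz_on (ball x e) f"
  shows "isCont f x"
  using lipschitz_on_continuous_on[OF assms(2)] assms(1) by (simp add: continuous_on_eq_continuous_at)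

lemma semiconvex_stationary_imp_le:
  assumes "semiconvex_on f X" "z \<in> X" "x \<in> X" "g \<in> clarke_subdiff f z" "0 \<le> inner g (x - z)"
  shows "f z \<le> f x"
proof -
  have "ereal 0 \<le> clarke_dd f z (x - z)"
    using assms(4,5) order_trans[of "ereal 0" "ereal (inner g (x - z))"] by (auto simp: clarke_subdiff_def)
  thus ?thesis using assms(1-3) by (simp add: semiconvex_on_def zero_ereal_def)
qed

section \<open>Boxes cut by a hyperplane\<close>

lemma boxset_eq_cbox: "boxset lo hi = cbox lo hi"
  by (auto simp: boxset_def mem_box_cart)

lemma feas_eq: "feas lo hi a b = cbox lo hi \<inter> {x. inner a x = b}"
  by (auto simp: feas_def boxset_eq_cbox)

lemma compact_feas: "compact (feas lo hi a b)"
  unfolding feas_eq by (intro compact_Int_closed compact_cbox closed_hyperplane)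

lemma feas_point_on_segment:
  fixes lo hi a c q :: "real^'n"
  assumes c: "c \<in> cbox lo hi" and q: "q \<in> cbox lo hi" and a: "\<And>i. 0 < a$i"
    and sign: "(\<forall>i. c$i \<le> q$i) \<or> (\<forall>i. q$i \<le> c$i)"
    and between: "min (inner a c) (inner a q) \<le> b" "b \<le> max (inner a c) (inner a q)"
  shows "\<exists>w\<in>feas lo hi a b. norm (w - c) \<le> \<bar>inner a c - b\<bar> * (\<Sum>i\<in>UNIV. 1 / a$i)"
proof -
  define S where "S = (\<Sum>i\<in>UNIV. 1 / a$i)"
  have span: "norm (q - c) \<le> \<bar>inner a c - inner a q\<bar> * S"
    using norm_le_abs_inner_sum_inverse[of "q - c" a] sign a
    by (simp add: S_def inner_diff_right abs_minus_commute)
  define t where "t = (inner a c - b) / (inner a c - inner a q)"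
  define w where "w = c + t *\<^sub>R (q - c)"
  have t: "0 \<le> t \<and> t \<le> 1 \<and> t * (inner a c - inner a q) = inner a c - b"
  proof (cases "inner a c = inner a q")
    case True
    with between have "b = inner a c" by simp
    with True show ?thesis by (simp add: t_def)
  next
    case False
    with between consider "inner a q \<le> b" "b \<le> inner a c" "inner a q < inner a c"
      | "inner a c \<le> b" "b \<le> inner a q" "inner a c < inner a q"
      by (auto simp: min_def max_def split: if_splits)
    thus ?thesis by cases (auto simp: t_def field_simps)
  qed
  have "inner a w = b" using t by (simp add: w_def inner_add_right inner_diff_right algebra_simps)
  moreover have "w \<in> cbox lo hi"
    using convexD[OF convex_box(1) c q, of "1 - t" t] t by (simp add: w_def algebra_simps)
  moreover have "norm (w - c) \<le> \<bar>inner a c - b\<bar> * S"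
  proof -
    have "norm (w - c) = t * norm (q - c)" using t by (simp add: w_def)
    also have "\<dots> \<le> t * (\<bar>inner a c - inner a q\<bar> * S)" using t span by (intro mult_left_mono) auto
    also have "\<dots> = \<bar>inner a c - b\<bar> * S" using t by (metis abs_mult abs_of_nonneg mult.assoc)
    finally show ?thesis .
  qed
  ultimately show ?thesis by (auto simp: S_def feas_eq)
qed

lemma feas_point_near:
  fixes lo hi a c :: "real^'n"
  assumes ne: "feas lo hi a b \<noteq> {}" and a: "\<And>i. 0 < a$i" and c: "c \<in> cbox lo hi"
  shows "\<exists>w\<in>feas lo hi a b. norm (w - c) \<le> \<bar>inner a c - b\<bar> * (\<Sum>i\<in>UNIV. 1 / a$i)"
proof -
  obtain p where p: "p \<in> cbox lo hi" "inner a p = b" using ne by (auto simp: feas_eq)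
  hence "inner a lo \<le> b" "b \<le> inner a hi"
    using a by (auto simp: mem_box_cart intro: inner_mono_cart)
  moreover have box: "lo \<in> cbox lo hi" "hi \<in> cbox lo hi"
    using p(1) by (auto simp: mem_box_cart intro: order_trans)
  moreover have "\<forall>i. lo$i \<le> c$i" "\<forall>i. c$i \<le> hi$i" using c by (auto simp: mem_box_cart)
  moreover have "inner a lo \<le> inner a c" "inner a c \<le> inner a hi"
    using calculation a by (auto intro: inner_mono_cart)
  ultimately show ?thesis
    using feas_point_on_segment[OF c box(1) a] feas_point_on_segment[OF c box(2) a]
    by (cases "b \<le> inner a c") auto
qed

lemma feas_limit:
  fixes x lo hi a :: "nat \<Rightarrow> real^'n"
  assumes "\<And>k. x k \<in> feas (lo k) (hi k) (a k) (b k)"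
    and "x \<longlonglongrightarrow> x0" "lo \<longlonglongrightarrow> lo0" "hi \<longlonglongrightarrow> hi0" "a \<longlonglongrightarrow> a0" "b \<longlonglongrightarrow> b0"
  shows "x0 \<in> feas lo0 hi0 a0 b0"
proof -
  have "lo0$i \<le> x0$i" "x0$i \<le> hi0$i" for i
    using assms by (auto simp: feas_def boxset_def intro!: tendsto_le[OF _ tendsto_vec_nth tendsto_vec_nth])
  moreover have "(\<lambda>k. inner (a k) (x k)) \<longlonglongrightarrow> inner a0 x0" using assms(5,2) by (rule tendsto_inner)
  hence "b \<longlonglongrightarrow> inner a0 x0" using assms(1) by (simp add: feas_def)
  hence "inner a0 x0 = b0" using assms(6) LIMSEQ_unique by blast
  ultimately show ?thesis by (simp add: feas_def boxset_def)
qed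

lemma feas_limit_approximable:
  fixes lo hi a x :: "real^'n" and alo ahi av :: "nat \<Rightarrow> real^'n"
  assumes ne: "\<And>l. feas (alo l) (ahi l) (av l) (bl l) \<noteq> {}"
    and av_pos: "\<And>l i. 0 < av l $ i" and a_pos: "\<And>i. 0 < a$i"
    and lims: "alo \<longlonglongrightarrow> lo" "ahi \<longlonglongrightarrow> hi" "av \<longlonglongrightarrow> a" "bl \<longlonglongrightarrow> \<beta>"
    and x: "x \<in> feas lo hi a \<beta>"
  obtains w where "\<And>l. w l \<in> feas (alo l) (ahi l) (av l) (bl l)" "w \<longlonglongrightarrow> x"
proof -
  define c where "c l = (\<chi> i. max (alo l $ i) (min (ahi l $ i) (x $ i)))" for l
  define S where "S l = (\<Sum>i\<in>UNIV. 1 / av l $ i)" for l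
  have "c l \<in> cbox (alo l) (ahi l)" for l
  proof -
    obtain p where "p \<in> feas (alo l) (ahi l) (av l) (bl l)" using ne by blast
    hence "alo l $ i \<le> ahi l $ i" for i by (auto simp: feas_eq mem_box_cart intro: order_trans)
    thus ?thesis by (auto simp: c_def mem_box_cart)
  qed
  hence "\<forall>l. \<exists>w\<in>feas (alo l) (ahi l) (av l) (bl l). norm (w - c l) \<le> \<bar>inner (av l) (c l) - bl l\<bar> * S l"
    using feas_point_near[OF ne av_pos] by (simp add: S_def)
  then obtain w where w: "\<And>l. w l \<in> feas (alo l) (ahi l) (av l) (bl l)"
    and near: "\<And>l. norm (w l - c l) \<le> \<bar>inner (av l) (c l) - bl l\<bar> * S l"
    by metis
  have "c \<longlonglongrightarrow> (\<chi> i. max (lo $ i) (min (hi $ i) (x $ i)))"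
    unfolding c_def using lims
    by (intro tendsto_vec_lambda tendsto_max tendsto_min tendsto_vec_nth tendsto_const)
  moreover have "(\<chi> i. max (lo $ i) (min (hi $ i) (x $ i))) = x"
    using x by (auto simp: feas_def boxset_def vec_eq_iff)
  ultimately have cx: "c \<longlonglongrightarrow> x" by simp
  have "(\<lambda>l. inner (av l) (c l) - bl l) \<longlonglongrightarrow> inner a x - \<beta>"
    using lims(3,4) cx by (intro tendsto_diff tendsto_inner)
  hence viol: "(\<lambda>l. \<bar>inner (av l) (c l) - bl l\<bar>) \<longlonglongrightarrow> 0"
    using x tendsto_rabs by (fastforce simp: feas_def)
  have "S \<longlonglongrightarrow> (\<Sum>i\<in>UNIV. 1 / a$i)"
    unfolding S_def using lims(3) a_pos[THEN less_imp_neq]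
    by (intro tendsto_sum tendsto_divide tendsto_const tendsto_vec_nth) auto
  from tendsto_mult[OF viol this]
  have bound: "(\<lambda>l. \<bar>inner (av l) (c l) - bl l\<bar> * S l) \<longlonglongrightarrow> 0" by simp
  have "(\<lambda>l. w l - c l) \<longlonglongrightarrow> 0" by (rule Lim_null_comparison[OF _ bound]) (simp add: near)
  from tendsto_add[OF this cx] have "w \<longlonglongrightarrow> x" by simp
  with w show ?thesis by (rule that)
qed

lemma bounded_range_in_converging_boxes:
  fixes z lo hi :: "nat \<Rightarrow> real^'n"
  assumes "lo \<longlonglongrightarrow> lo0" "hi \<longlonglongrightarrow> hi0" "\<And>l. z l \<in> cbox (lo l) (hi l)"
  shows "bounded (range z)"
proof -
  obtain B1 B2 where B: "\<And>l. norm (lo l) \<le> B1" "\<And>l. norm (hi l) \<le> B2"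
    using convergent_imp_bounded[OF assms(1)] convergent_imp_bounded[OF assms(2)]
    unfolding bounded_iff by blast
  have "\<bar>z l $ i\<bar> \<le> B1 + B2" for l i
  proof -
    have "lo l $ i \<le> z l $ i" "z l $ i \<le> hi l $ i" using assms(3)[of l] by (simp_all add: mem_box_cart)
    moreover have "\<bar>lo l $ i\<bar> \<le> B1" "\<bar>hi l $ i\<bar> \<le> B2"
      using component_le_norm_cart B order_trans by blast+
    ultimately show ?thesis by linarith
  qed
  hence "norm (z l) \<le> real CARD('n) * (B1 + B2)" for l
    using norm_le_l1_cart[of "z l"] sum_mono[of UNIV "\<lambda>i. \<bar>z l $ i\<bar>" "\<lambda>_. B1 + B2"] by simp
  thus ?thesis by (auto simp: bounded_iff)
qed

text \<open>The multiplier of the constraint is the least scaled gradient entry among coordinates that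
  can still increase; with it every summand of the Lagrangian expansion is nonnegative.\<close>
lemma feas_variational_inequality:
  fixes lo hi a g z x :: "real^'n"
  assumes a: "\<And>i. 0 < a$i" and z: "z \<in> feas lo hi a b" and x: "x \<in> feas lo hi a b"
    and kkt: "\<And>i j. lo$i < z$i \<Longrightarrow> z$j < hi$j \<Longrightarrow> g$i / a$i \<le> g$j / a$j"
  shows "0 \<le> inner g (x - z)"
proof (cases "\<exists>j. z$j < hi$j")
  case False
  have "x$i \<le> z$i" for i
  proof -
    have "x$i \<le> hi$i" using x by (simp add: feas_def boxset_def)
    thus ?thesis using False[unfolded not_ex not_less, rule_format, of i] by linarith
  qed
  hence "x = z" using eq_if_le_and_inner_eq[of x z a] a x z by (simp add: feas_def)
  thus ?thesis by simp
next
  case True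
  define J where "J = {j. z$j < hi$j}"
  define \<mu> where "\<mu> = Min ((\<lambda>j. g$j / a$j) ` J)"
  have xz: "lo$i \<le> x$i" "x$i \<le> hi$i" "lo$i \<le> z$i" "z$i \<le> hi$i" for i
    using x z by (auto simp: feas_def boxset_def)
  have "inner a (x - z) = 0" using x z by (simp add: feas_def inner_diff_right)
  hence "inner g (x - z) = inner g (x - z) - \<mu> * inner a (x - z)" by simp
  also have "\<dots> = (\<Sum>i\<in>UNIV. a$i * (g$i / a$i - \<mu>) * (x$i - z$i))"
    unfolding inner_vec_def sum_distrib_left sum_subtractf[symmetric] using a
    by (intro sum.cong refl) (simp add: field_simps less_imp_neq[symmetric])
  also have "\<dots> \<ge> 0"
  proof (intro sum_nonneg)
    fix i
    consider "z$i < x$i" | "x$i < z$i" | "x$i = z$i" by linarith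
    thus "0 \<le> a$i * (g$i / a$i - \<mu>) * (x$i - z$i)"
    proof cases
      case 1
      hence "i \<in> J" using xz[of i] by (simp add: J_def)
      hence "\<mu> \<le> g$i / a$i" unfolding \<mu>_def by (intro Min_le) auto
      thus ?thesis using 1 a[of i] by simp
    next
      case 2
      hence "lo$i < z$i" using xz[of i] by linarith
      hence "g$i / a$i \<le> \<mu>" unfolding \<mu>_def using True kkt by (subst Min_ge_iff) (auto simp: J_def)
      thus ?thesis using 2 a[of i] by (simp add: mult_nonpos_nonpos mult_nonneg_nonpos)
    qed simp
  qed
  finally show ?thesis .
qed

section \<open>One stage of the method\<close>

definition bcv_max_step :: "real^'n \<Rightarrow> real^'n \<Rightarrow> real^'n \<Rightarrow> real^'n \<Rightarrow> 'n \<Rightarrow> 'n \<Rightarrow> real" where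
  "bcv_max_step lo hi a x i j = min (a$i * (x$i - lo$i)) (a$j * (hi$j - x$j))"

definition bcv_dir :: "real^'n \<Rightarrow> 'n \<Rightarrow> 'n \<Rightarrow> real^'n" where
  "bcv_dir a i j = (\<chi> s. if s = i then - 1 / a$i else if s = j then 1 / a$j else 0)"

definition armijo :: "(real^'n \<Rightarrow> real) \<Rightarrow> (real^'n \<Rightarrow> real^'n) \<Rightarrow> real \<Rightarrow> real^'n \<Rightarrow> real^'n \<Rightarrow> real \<Rightarrow> bool" where
  "armijo fl g sig x d t \<longleftrightarrow> fl (x + t *\<^sub>R d) \<le> fl x + sig * t * inner (g x) d"

lemma bcv_step_iff:
  "bcv_step lo hi a fl g eps del sig th x x' \<longleftrightarrow>
    (\<exists>i j m. bcv_pair lo hi a g eps del x i j \<and>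
       armijo fl g sig x (bcv_dir a i j) (th ^ m * bcv_max_step lo hi a x i j) \<and>
       (\<forall>m'<m. \<not> armijo fl g sig x (bcv_dir a i j) (th ^ m' * bcv_max_step lo hi a x i j)) \<and>
       x' = x + (th ^ m * bcv_max_step lo hi a x i j) *\<^sub>R bcv_dir a i j)"
  unfolding bcv_step_def Let_def bcv_max_step_def bcv_dir_def armijo_def by (simp add: mult.assoc)

lemma bcv_dir_eq_axis: "i \<noteq> j \<Longrightarrow> bcv_dir a i j = (- 1 / a$i) *\<^sub>R axis i 1 + (1 / a$j) *\<^sub>R axis j 1"
  by (auto simp: bcv_dir_def vec_eq_iff axis_def)

lemma inner_bcv_dir: "i \<noteq> j \<Longrightarrow> inner v (bcv_dir a i j) = v$j / a$j - v$i / a$i"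
  by (simp add: bcv_dir_eq_axis inner_diff_right inner_axis)

lemma norm_bcv_dir_le:
  assumes "i \<noteq> j" "\<And>s. a$s > 0"
  shows "norm (bcv_dir a i j) \<le> (\<Sum>s\<in>UNIV. 1 / a$s)"
proof -
  have "norm (bcv_dir a i j) \<le> 1 / a$i + 1 / a$j"
    using norm_triangle_ineq[of "(- 1 / a$i) *\<^sub>R axis i (1::real)" "(1 / a$j) *\<^sub>R axis j 1"] assms
    by (simp add: bcv_dir_eq_axis norm_axis_1 less_imp_le)
  also have "\<dots> = (\<Sum>s\<in>{i,j}. 1 / a$s)" using assms(1) by simp
  also have "\<dots> \<le> (\<Sum>s\<in>UNIV. 1 / a$s)" using assms(2) by (intro sum_mono2) (auto simp: less_imp_le)
  finally show ?thesis .
qed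

text \<open>The right-hand side \<open>b\<close> occurs in no assumption, so the locale predicate \<open>bcv_stage\<close>
  does not take it as an argument.\<close>

locale bcv_stage =
  fixes lo hi a :: "real^'n" and b :: real and fl :: "real^'n \<Rightarrow> real"
    and g :: "real^'n \<Rightarrow> real^'n" and eps del sig th :: real and U :: "(real^'n) set"
  assumes a_pos: "\<And>i. a$i > 0"
    and U: "open U" "cbox lo hi \<subseteq> U"
    and gderiv: "\<And>x. x \<in> U \<Longrightarrow> GDERIV fl x :> g x"
    and g_cont: "continuous_on U g"
    and sig: "0 < sig" "sig < 1" and th: "0 < th" "th < 1"
    and eps: "eps > 0" and del: "del > 0"
begin

abbreviation "F \<equiv> feas lo hi a b"
abbreviation "step \<equiv> bcv_step lo hi a fl g eps del sig th"

lemma feas_subset_U: "F \<subseteq> U"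
  using U by (auto simp: feas_eq)

lemma bcv_pair_facts:
  assumes "bcv_pair lo hi a g eps del x i j"
  shows "i \<noteq> j" "eps \<le> bcv_max_step lo hi a x i j" "inner (g x) (bcv_dir a i j) \<le> - del"
proof -
  from assms have i: "lo$i + eps / a$i \<le> x$i" and j: "x$j \<le> hi$j - eps / a$j"
    and h: "del \<le> (g x)$i / a$i - (g x)$j / a$j"
    by (auto simp: bcv_pair_def Iminus_def Iplus_def)
  show ij: "i \<noteq> j" using h del by auto
  show "eps \<le> bcv_max_step lo hi a x i j"
    using i j a_pos[of i] a_pos[of j] by (simp add: bcv_max_step_def field_simps)
  show "inner (g x) (bcv_dir a i j) \<le> - del" using h by (simp add: inner_bcv_dir[OF ij])
qed

lemma segment_in_feas:
  assumes x: "x \<in> F" and p: "bcv_pair lo hi a g eps del x i j"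
    and t: "0 \<le> t" "t \<le> bcv_max_step lo hi a x i j"
  shows "x + t *\<^sub>R bcv_dir a i j \<in> F"
proof -
  have ij: "i \<noteq> j" using bcv_pair_facts[OF p] by simp
  have ai: "a$i > 0" "a$j > 0" using a_pos by auto
  have xb: "lo$s \<le> x$s" "x$s \<le> hi$s" for s using x by (auto simp: feas_def boxset_def)
  have "lo$i \<le> x$i - t / a$i" "x$j + t / a$j \<le> hi$j"
    using t ai by (auto simp: bcv_max_step_def field_simps)
  moreover have "0 \<le> t / a$i" "0 \<le> t / a$j" using t ai by auto
  ultimately have "lo$s \<le> (x + t *\<^sub>R bcv_dir a i j)$s \<and> (x + t *\<^sub>R bcv_dir a i j)$s \<le> hi$s" for s
    using xb[of s] xb[of i] xb[of j] ij by (auto simp: bcv_dir_def)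
  moreover have "inner a (x + t *\<^sub>R bcv_dir a i j) = b"
    using x ai ij by (simp add: inner_add_right inner_bcv_dir feas_def)
  ultimately show ?thesis by (simp add: feas_def boxset_def)
qed

lemma line_has_derivative:
  assumes "x + t *\<^sub>R d \<in> U"
  shows "((\<lambda>s. fl (x + s *\<^sub>R d)) has_real_derivative inner (g (x + t *\<^sub>R d)) d) (at t)"
proof -
  have fl: "(fl has_derivative (\<lambda>h. inner h (g (x + t *\<^sub>R d)))) (at (x + t *\<^sub>R d))"
    using gderiv[OF assms] by (simp add: gderiv_def)
  have line: "((\<lambda>s. x + s *\<^sub>R d) has_derivative (\<lambda>h. h *\<^sub>R d)) (at t)"
    by (auto intro!: derivative_eq_intros)
  show ?thesis
    using has_derivative_compose[OF line fl]
    by (simp add: has_field_derivative_def inner_commute mult.commute[of _ "inner d _"])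
qed

lemma armijo_eventually:
  assumes x: "x \<in> F" and p: "bcv_pair lo hi a g eps del x i j"
  shows "\<exists>m. armijo fl g sig x (bcv_dir a i j) (th ^ m * bcv_max_step lo hi a x i j)"
proof -
  define d where "d = bcv_dir a i j"
  define \<gamma> where "\<gamma> = bcv_max_step lo hi a x i j"
  define q where "q = inner (g x) d"
  have q: "q \<le> - del" and \<gamma>: "eps \<le> \<gamma>" using bcv_pair_facts[OF p] by (auto simp: q_def d_def \<gamma>_def)
  have "x + 0 *\<^sub>R d \<in> U" using x feas_subset_U by auto
  from has_field_derivative_at_within[OF line_has_derivative[OF this]]
  have "((\<lambda>s. fl (x + s *\<^sub>R d)) has_real_derivative q) (at_right 0)"
    by (simp add: q_def)
  hence "((\<lambda>s. (fl (x + s *\<^sub>R d) - fl x) / s) \<longlongrightarrow> q) (at_right 0)"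
    by (simp add: has_field_derivative_iff)
  moreover have "q < sig * q" using q sig del by (simp add: mult_less_cancel_right2)
  ultimately have ev: "\<forall>\<^sub>F s in at_right 0. (fl (x + s *\<^sub>R d) - fl x) / s < sig * q"
    using order_tendstoD(2) by blast
  have "(\<lambda>m. th ^ m * \<gamma>) \<longlonglongrightarrow> 0"
    using th by (intro tendsto_mult_left_zero LIMSEQ_power_zero) auto
  hence "filterlim (\<lambda>m. th ^ m * \<gamma>) (at_right 0) sequentially"
    using th \<gamma> eps by (intro tendsto_imp_filterlim_at_right) auto
  from eventually_compose_filterlim[OF ev this]
  obtain m where "(fl (x + (th ^ m * \<gamma>) *\<^sub>R d) - fl x) / (th ^ m * \<gamma>) < sig * q"
    by (auto simp: eventually_sequentially)
  moreover have "th ^ m * \<gamma> > 0" using th \<gamma> eps by auto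
  ultimately show ?thesis
    by (intro exI[of _ m]) (auto simp: armijo_def d_def \<gamma>_def q_def divide_less_eq algebra_simps)
qed

lemma step_in_feas:
  assumes "x \<in> F" "step x x'" shows "x' \<in> F"
proof -
  from assms(2) obtain i j m where p: "bcv_pair lo hi a g eps del x i j"
    and x': "x' = x + (th ^ m * bcv_max_step lo hi a x i j) *\<^sub>R bcv_dir a i j"
    unfolding bcv_step_iff by blast
  have "0 \<le> bcv_max_step lo hi a x i j" using bcv_pair_facts(2)[OF p] eps by linarith
  moreover have "th ^ m \<le> 1" "0 \<le> th ^ m" using th by (auto simp: power_le_one)
  ultimately show ?thesis
    using segment_in_feas[OF assms(1) p] by (simp add: x' mult_left_le_one_le)
qed

lemma steps_in_feas: "step\<^sup>*\<^sup>* x y \<Longrightarrow> x \<in> F \<Longrightarrow> y \<in> F"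
  by (induction rule: rtranclp_induct) (auto intro: step_in_feas)

lemma step_exists:
  assumes "x \<in> F" "\<not> bcv_stop lo hi a g eps del x" shows "\<exists>x'. step x x'"
proof -
  from assms(2) obtain i j where p: "bcv_pair lo hi a g eps del x i j" by (auto simp: bcv_stop_def)
  define A where "A m \<longleftrightarrow> armijo fl g sig x (bcv_dir a i j) (th ^ m * bcv_max_step lo hi a x i j)" for m
  have "A (LEAST m. A m)" "\<forall>m'<(LEAST m. A m). \<not> A m'"
    using armijo_eventually[OF assms(1) p] by (auto simp: A_def intro: LeastI_ex dest: not_less_Least)
  thus ?thesis unfolding bcv_step_iff using p by (auto simp: A_def)
qed

lemma armijo_failure_mean_value:
  assumes x: "x \<in> F" and p: "bcv_pair lo hi a g eps del x i j"
    and t: "0 < t" "t \<le> bcv_max_step lo hi a x i j"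
    and fail: "\<not> armijo fl g sig x (bcv_dir a i j) t"
  obtains \<xi> where "0 < \<xi>" "\<xi> < t" "x + \<xi> *\<^sub>R bcv_dir a i j \<in> F"
    "(1 - sig) * del < inner (g (x + \<xi> *\<^sub>R bcv_dir a i j) - g x) (bcv_dir a i j)"
proof -
  define d where "d = bcv_dir a i j"
  have seg: "x + s *\<^sub>R d \<in> F" if "0 \<le> s" "s \<le> t" for s
    using segment_in_feas[OF x p, of s] that t by (auto simp: d_def)
  have "\<exists>\<xi>>0. \<xi> < t \<and> fl (x + t *\<^sub>R d) - fl (x + 0 *\<^sub>R d) = (t - 0) * inner (g (x + \<xi> *\<^sub>R d)) d"
    using t seg feas_subset_U by (intro MVT2 line_has_derivative) auto
  then obtain \<xi> where \<xi>: "0 < \<xi>" "\<xi> < t"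
    and mv: "fl (x + t *\<^sub>R d) - fl x = t * inner (g (x + \<xi> *\<^sub>R d)) d" by auto
  have "t * (sig * inner (g x) d) < t * inner (g (x + \<xi> *\<^sub>R d)) d"
    using fail mv by (simp add: armijo_def d_def algebra_simps)
  hence "sig * inner (g x) d < inner (g (x + \<xi> *\<^sub>R d)) d" using t by simp
  moreover have "(1 - sig) * del \<le> (1 - sig) * - inner (g x) d"
    using bcv_pair_facts(3)[OF p] sig by (intro mult_left_mono) (auto simp: d_def)
  ultimately have "(1 - sig) * del < inner (g (x + \<xi> *\<^sub>R d) - g x) d"
    by (simp add: inner_diff_left algebra_simps)
  with \<xi> seg[of \<xi>] show ?thesis using that by (simp add: d_def)
qed

text \<open>Uniform continuity of the gradient on the compact box: a failed Armijo test at step length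
  t forces the gradient to change by a fixed amount between x and a point of the segment of
  length t.\<close>
lemma armijo_failure_far:
  obtains \<rho> where "\<rho> > 0"
    "\<And>x i j t. x \<in> F \<Longrightarrow> bcv_pair lo hi a g eps del x i j \<Longrightarrow> 0 < t \<Longrightarrow> t \<le> bcv_max_step lo hi a x i j \<Longrightarrow>
       \<not> armijo fl g sig x (bcv_dir a i j) t \<Longrightarrow> \<rho> \<le> t"
proof -
  define K where "K = (\<Sum>s\<in>UNIV. 1 / a$s)"
  have K: "K > 0" unfolding K_def using a_pos by (intro sum_pos) auto
  define \<eta> where "\<eta> = (1 - sig) * del / K"
  have "uniformly_continuous_on (cbox lo hi) g"
    using g_cont U by (intro compact_uniformly_continuous) (auto intro: continuous_on_subset)
  moreover have "\<eta> > 0" using sig del K by (simp add: \<eta>_def)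
  ultimately obtain \<rho> where \<rho>: "\<rho> > 0"
    and uc: "\<And>x y. x \<in> cbox lo hi \<Longrightarrow> y \<in> cbox lo hi \<Longrightarrow> dist y x < \<rho> \<Longrightarrow> dist (g y) (g x) < \<eta>"
    unfolding uniformly_continuous_on_def by metis
  show ?thesis
  proof (rule that[of "\<rho> / K"])
    show "0 < \<rho> / K" using \<rho> K by simp
    fix x i j t
    assume x: "x \<in> F" and p: "bcv_pair lo hi a g eps del x i j"
      and t: "0 < t" "t \<le> bcv_max_step lo hi a x i j" and fail: "\<not> armijo fl g sig x (bcv_dir a i j) t"
    define d where "d = bcv_dir a i j"
    have nd: "norm d \<le> K" using norm_bcv_dir_le[OF bcv_pair_facts(1)[OF p] a_pos] by (simp add: d_def K_def)
    obtain \<xi> where \<xi>: "0 < \<xi>" "\<xi> < t" and yF: "x + \<xi> *\<^sub>R d \<in> F"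
      and gap: "(1 - sig) * del < inner (g (x + \<xi> *\<^sub>R d) - g x) d"
      using armijo_failure_mean_value[OF x p t fail] by (auto simp: d_def)
    have "inner (g (x + \<xi> *\<^sub>R d) - g x) d \<le> norm (g (x + \<xi> *\<^sub>R d) - g x) * K"
      using Cauchy_Schwarz_ineq2[of "g (x + \<xi> *\<^sub>R d) - g x" d] nd
      by (smt (verit) mult_left_mono norm_ge_zero)
    with gap K have "\<eta> \<le> dist (g (x + \<xi> *\<^sub>R d)) (g x)"
      by (simp add: \<eta>_def dist_norm divide_le_eq)
    hence "\<rho> \<le> \<xi> * norm d" using uc[of x "x + \<xi> *\<^sub>R d"] x yF \<xi>
      by (force simp: feas_eq dist_norm)
    also have "\<dots> \<le> t * K" using nd \<xi> by (intro mult_mono) auto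
    finally show "\<rho> / K \<le> t" using K by (simp add: divide_le_eq)
  qed
qed

lemma armijo_step_length_bound:
  obtains \<tau> where "\<tau> > 0"
    "\<And>x i j m. x \<in> F \<Longrightarrow> bcv_pair lo hi a g eps del x i j \<Longrightarrow>
       (\<forall>m'<m. \<not> armijo fl g sig x (bcv_dir a i j) (th ^ m' * bcv_max_step lo hi a x i j)) \<Longrightarrow>
       \<tau> \<le> th ^ m * bcv_max_step lo hi a x i j"
proof -
  obtain \<rho> where \<rho>: "\<rho> > 0" and far:
    "\<And>x i j t. x \<in> F \<Longrightarrow> bcv_pair lo hi a g eps del x i j \<Longrightarrow> 0 < t \<Longrightarrow> t \<le> bcv_max_step lo hi a x i j \<Longrightarrow>
       \<not> armijo fl g sig x (bcv_dir a i j) t \<Longrightarrow> \<rho> \<le> t"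
    using armijo_failure_far by blast
  show ?thesis
  proof (rule that[of "min eps (th * \<rho>)"])
    show "0 < min eps (th * \<rho>)" using eps th \<rho> by simp
    fix x i j m
    assume x: "x \<in> F" and p: "bcv_pair lo hi a g eps del x i j"
      and mini: "\<forall>m'<m. \<not> armijo fl g sig x (bcv_dir a i j) (th ^ m' * bcv_max_step lo hi a x i j)"
    have \<gamma>: "eps \<le> bcv_max_step lo hi a x i j" using bcv_pair_facts(2)[OF p] .
    show "min eps (th * \<rho>) \<le> th ^ m * bcv_max_step lo hi a x i j"
    proof (cases m)
      case 0 thus ?thesis using \<gamma> by simp
    next
      case (Suc k)
      have "0 < th ^ k * bcv_max_step lo hi a x i j" using th \<gamma> eps by simp
      moreover have "th ^ k * bcv_max_step lo hi a x i j \<le> bcv_max_step lo hi a x i j"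
        using th \<gamma> eps by (intro mult_left_le_one_le) (auto simp: power_le_one)
      ultimately have "\<rho> \<le> th ^ k * bcv_max_step lo hi a x i j"
        using far[OF x p] mini Suc by blast
      hence "th * \<rho> \<le> th * (th ^ k * bcv_max_step lo hi a x i j)"
        using th by (intro mult_left_mono) auto
      thus ?thesis using Suc by (metis min.coboundedI2 mult.assoc power_Suc)
    qed
  qed
qed

lemma step_sufficient_decrease:
  obtains c where "c > 0" "\<And>x x'. x \<in> F \<Longrightarrow> step x x' \<Longrightarrow> fl x' \<le> fl x - c"
proof -
  obtain \<tau> where \<tau>: "\<tau> > 0" and long:
    "\<And>x i j m. x \<in> F \<Longrightarrow> bcv_pair lo hi a g eps del x i j \<Longrightarrow>
       (\<forall>m'<m. \<not> armijo fl g sig x (bcv_dir a i j) (th ^ m' * bcv_max_step lo hi a x i j)) \<Longrightarrow>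
       \<tau> \<le> th ^ m * bcv_max_step lo hi a x i j"
    using armijo_step_length_bound by blast
  show ?thesis
  proof (rule that[of "sig * del * \<tau>"])
    show "0 < sig * del * \<tau>" using sig del \<tau> by simp
    fix x x' assume x: "x \<in> F" and "step x x'"
    then obtain i j m where p: "bcv_pair lo hi a g eps del x i j"
      and arm: "armijo fl g sig x (bcv_dir a i j) (th ^ m * bcv_max_step lo hi a x i j)"
      and mini: "\<forall>m'<m. \<not> armijo fl g sig x (bcv_dir a i j) (th ^ m' * bcv_max_step lo hi a x i j)"
      and x': "x' = x + (th ^ m * bcv_max_step lo hi a x i j) *\<^sub>R bcv_dir a i j"
      unfolding bcv_step_iff by blast
    define t where "t = th ^ m * bcv_max_step lo hi a x i j"
    have "\<tau> \<le> t" using long[OF x p mini] by (simp add: t_def)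
    have "fl x' \<le> fl x + sig * t * inner (g x) (bcv_dir a i j)"
      using arm by (simp add: armijo_def x' t_def)
    also have "\<dots> \<le> fl x + sig * t * - del"
      using bcv_pair_facts(3)[OF p] sig \<open>\<tau> \<le> t\<close> \<tau> by (intro add_left_mono mult_left_mono) auto
    also have "\<dots> \<le> fl x - sig * del * \<tau>"
      using \<open>\<tau> \<le> t\<close> sig del by (simp add: algebra_simps mult_left_mono)
    finally show "fl x' \<le> fl x - sig * del * \<tau>" .
  qed
qed

lemma no_infinite_run:
  assumes "s 0 \<in> F" shows "\<not> (\<forall>k. step (s k) (s (Suc k)))"
proof
  assume run: "\<forall>k. step (s k) (s (Suc k))"
  obtain c where c: "c > 0" "\<And>x x'. x \<in> F \<Longrightarrow> step x x' \<Longrightarrow> fl x' \<le> fl x - c"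
    using step_sufficient_decrease by blast
  have sF: "s k \<in> F" for k by (induction k) (use assms run step_in_feas in auto)
  have descent: "fl (s k) \<le> fl (s 0) - real k * c" for k
  proof (induction k)
    case (Suc k)
    thus ?case using c(2)[OF sF run[rule_format, of k]] by (simp add: algebra_simps)
  qed simp
  have "continuous_on F fl"
    using feas_subset_U gderiv
    by (intro has_derivative_continuous_on) (auto simp: gderiv_def intro: has_derivative_at_withinI)
  hence "bounded (fl ` F)" by (intro compact_imp_bounded compact_continuous_image compact_feas)
  then obtain B where B: "\<And>x. x \<in> F \<Longrightarrow> \<bar>fl x\<bar> \<le> B" by (auto simp: bounded_real)
  obtain k :: nat where "(fl (s 0) + B + 1) / c < real k" using reals_Archimedean2 by blast
  hence "fl (s 0) + B + 1 < real k * c" using c by (simp add: divide_less_eq)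
  with descent[of k] B[OF sF[of k]] show False by linarith
qed

lemma stage_terminates:
  assumes "x0 \<in> F"
  shows "\<not> (\<exists>s. s 0 = x0 \<and> (\<forall>k. step (s k) (s (Suc k)))) \<and>
    (\<forall>x. step\<^sup>*\<^sup>* x0 x \<and> \<not> bcv_stop lo hi a g eps del x \<longrightarrow> (\<exists>x'. step x x'))"
  using no_infinite_run step_exists steps_in_feas assms by blast

end

section \<open>Limit points of the outer sequence\<close>

lemma bcv_stop_limit:
  fixes x lo hi a :: "nat \<Rightarrow> real^'n" and g :: "nat \<Rightarrow> real^'n \<Rightarrow> real^'n"
  assumes stop: "\<forall>\<^sub>F k in sequentially. bcv_stop (lo k) (hi k) (a k) (g k) (eps k) (del k) (x k)"
    and lims: "x \<longlonglongrightarrow> x0" "lo \<longlonglongrightarrow> lo0" "hi \<longlonglongrightarrow> hi0" "a \<longlonglongrightarrow> a0" "(\<lambda>k. g k (x k)) \<longlonglongrightarrow> g0"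
      "eps \<longlonglongrightarrow> 0" "del \<longlonglongrightarrow> 0"
    and a0: "\<And>i. a0$i \<noteq> 0"
    and i: "lo0$i < x0$i" and j: "x0$j < hi0$j"
  shows "g0$i / a0$i \<le> g0$j / a0$j"
proof -
  have "(\<lambda>k. x k $ i - (lo k $ i + eps k / a k $ i)) \<longlonglongrightarrow> x0$i - (lo0$i + 0 / a0$i)"
    "(\<lambda>k. (hi k $ j - eps k / a k $ j) - x k $ j) \<longlonglongrightarrow> (hi0$j - 0 / a0$j) - x0$j"
    using lims a0 by (intro tendsto_intros tendsto_vec_nth; simp)+
  hence "\<forall>\<^sub>F k in sequentially. lo k $ i + eps k / a k $ i < x k $ i"
    "\<forall>\<^sub>F k in sequentially. x k $ j < hi k $ j - eps k / a k $ j"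
    using i j by (auto dest: order_tendstoD(1)[where a = 0])
  with stop have "\<forall>\<^sub>F k in sequentially. (g k (x k))$i / a k $ i - (g k (x k))$j / a k $ j \<le> del k"
  proof eventually_elim
    case (elim k)
    hence "\<not> bcv_pair (lo k) (hi k) (a k) (g k) (eps k) (del k) (x k) i j" by (simp add: bcv_stop_def)
    thus ?case using elim by (auto simp: bcv_pair_def Iminus_def Iplus_def)
  qed
  moreover have "(\<lambda>k. (g k (x k))$i / a k $ i - (g k (x k))$j / a k $ j) \<longlonglongrightarrow> g0$i / a0$i - g0$j / a0$j"
    using lims a0 by (intro tendsto_intros tendsto_vec_nth) auto
  ultimately have "g0$i / a0$i - g0$j / a0$j \<le> 0"
    using tendsto_le[OF trivial_limit_sequentially lims(7)] by blast
  thus ?thesis by simp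
qed

lemma bcv_limit_point_stationary:
  fixes lo hi a zb :: "real^'n" and alo ahi av z :: "nat \<Rightarrow> real^'n"
    and G :: "nat \<Rightarrow> real^'n \<Rightarrow> real^'n"
  assumes a_pos: "\<And>i. 0 < a$i" and av_pos: "\<And>l i. 0 < av l $ i"
    and ne: "\<And>l. feas (alo l) (ahi l) (av l) (bl l) \<noteq> {}"
    and lims: "alo \<longlonglongrightarrow> lo" "ahi \<longlonglongrightarrow> hi" "av \<longlonglongrightarrow> a" "bl \<longlonglongrightarrow> \<beta>" "eps \<longlonglongrightarrow> 0" "del \<longlonglongrightarrow> 0"
    and grad: "\<forall>y yb. (\<forall>l. y l \<in> feas (alo l) (ahi l) (av l) (bl l)) \<and> y \<longlonglongrightarrow> yb \<longrightarrow>
                 (\<exists>gb\<in>clarke_subdiff f yb. (\<lambda>l. G l (y l)) \<longlonglongrightarrow> gb)"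
    and z: "\<And>l. z l \<in> feas (alo l) (ahi l) (av l) (bl l)"
    and stop: "\<And>l. 1 \<le> l \<Longrightarrow> bcv_stop (alo l) (ahi l) (av l) (G l) (eps l) (del l) (z l)"
    and r: "strict_mono r" and zr: "(z \<circ> r) \<longlonglongrightarrow> zb"
  shows "zb \<in> feas lo hi a \<beta> \<and> (\<exists>gb\<in>clarke_subdiff f zb. \<forall>x\<in>feas lo hi a \<beta>. 0 \<le> inner gb (x - zb))"
proof -
  note sub = LIMSEQ_subseq_LIMSEQ[OF _ r, unfolded o_def]
  have zb: "zb \<in> feas lo hi a \<beta>"
    using feas_limit[OF _ zr[unfolded o_def] sub[OF lims(1)] sub[OF lims(2)] sub[OF lims(3)] sub[OF lims(4)]] z .
  obtain w where w: "\<And>l. w l \<in> feas (alo l) (ahi l) (av l) (bl l)" and "w \<longlonglongrightarrow> zb"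
    using feas_limit_approximable[OF ne av_pos a_pos lims(1-4) zb] by blast
  \<comment> \<open>(A3) speaks about whole sequences in \<open>D\<^sub>l\<close>, so the subsequence is completed by approximants.\<close>
  define y where "y l = (if l \<in> range r then z l else w l)" for l
  have "\<forall>l. y l \<in> feas (alo l) (ahi l) (av l) (bl l)" using z w by (simp add: y_def)
  moreover have "y \<longlonglongrightarrow> zb" unfolding y_def by (rule LIMSEQ_splice_subseq) fact+
  ultimately obtain gb where gb: "gb \<in> clarke_subdiff f zb" and "(\<lambda>l. G l (y l)) \<longlonglongrightarrow> gb"
    using grad by blast
  from sub[OF this(2)] have Gz: "(\<lambda>k. G (r k) (z (r k))) \<longlonglongrightarrow> gb" by (simp add: y_def)
  have "\<forall>\<^sub>F k in sequentially. bcv_stop (alo (r k)) (ahi (r k)) (av (r k)) (G (r k)) (eps (r k)) (del (r k)) (z (r k))"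
    using stop seq_suble[OF r] by (intro eventually_sequentiallyI[of 1]) (meson order_trans)
  note kkt = bcv_stop_limit[OF this zr[unfolded o_def] sub[OF lims(1)] sub[OF lims(2)] sub[OF lims(3)] Gz
      sub[OF lims(5)] sub[OF lims(6)] a_pos[THEN less_imp_neq, symmetric]]
  show ?thesis using feas_variational_inequality[OF a_pos zb _ kkt] zb gb by blast
qed

lemma bcv_outer_limit_points:
  fixes lo hi a :: "real^'n" and alo ahi av z :: "nat \<Rightarrow> real^'n"
    and G :: "nat \<Rightarrow> real^'n \<Rightarrow> real^'n" and f :: "real^'n \<Rightarrow> real"
  assumes a_pos: "\<forall>i. 0 < a$i" and av_pos: "\<forall>l i. 0 < av l $ i"
    and f_lipschitz: "\<forall>x\<in>boxset lo hi. \<exists>e>0. \<exists>L. L-lipschitz_on (ball x e) f"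
    and ne: "\<forall>l. feas (alo l) (ahi l) (av l) (bl l) \<noteq> {}"
    and lims: "alo \<longlonglongrightarrow> lo" "ahi \<longlonglongrightarrow> hi" "av \<longlonglongrightarrow> a" "bl \<longlonglongrightarrow> \<beta>" "eps \<longlonglongrightarrow> 0" "del \<longlonglongrightarrow> 0"
    and grad: "\<forall>y yb. (\<forall>l. y l \<in> feas (alo l) (ahi l) (av l) (bl l)) \<and> y \<longlonglongrightarrow> yb \<longrightarrow>
                 (\<exists>gb\<in>clarke_subdiff f yb. (\<lambda>l. G l (y l)) \<longlonglongrightarrow> gb)"
    and z: "\<And>l. z l \<in> feas (alo l) (ahi l) (av l) (bl l)"
    and stop: "\<And>l. 1 \<le> l \<Longrightarrow> bcv_stop (alo l) (ahi l) (av l) (G l) (eps l) (del l) (z l)"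
  shows "(\<exists>zb r. strict_mono r \<and> (z \<circ> r) \<longlonglongrightarrow> zb) \<and>
    (\<forall>zb r. strict_mono r \<and> (z \<circ> r) \<longlonglongrightarrow> zb \<longrightarrow>
       zb \<in> feas lo hi a \<beta> \<and> (\<exists>gb\<in>clarke_subdiff f zb. \<forall>x\<in>feas lo hi a \<beta>. 0 \<le> inner gb (x - zb))) \<and>
    (semiconvex_on f (boxset lo hi) \<longrightarrow>
       (\<lambda>l. f (z l)) \<longlonglongrightarrow> (INF x\<in>feas lo hi a \<beta>. f x) \<and>
       (\<forall>zb r. strict_mono r \<and> (z \<circ> r) \<longlonglongrightarrow> zb \<longrightarrow> zb \<in> feas lo hi a \<beta> \<and> f zb = (INF x\<in>feas lo hi a \<beta>. f x)))"
proof -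
  have bdd: "bounded (range z)"
    by (rule bounded_range_in_converging_boxes[OF lims(1,2)]) (use z in \<open>simp add: feas_eq\<close>)
  note stationary = bcv_limit_point_stationary[OF _ _ _ lims grad z stop] a_pos av_pos ne
  have optimal: "zb \<in> feas lo hi a \<beta> \<and> f zb = (INF x\<in>feas lo hi a \<beta>. f x)"
    if sc: "semiconvex_on f (boxset lo hi)" and r: "strict_mono r" and zr: "(z \<circ> r) \<longlonglongrightarrow> zb" for zb r
  proof -
    obtain gb where zb: "zb \<in> feas lo hi a \<beta>" and gb: "gb \<in> clarke_subdiff f zb"
      and vi: "\<forall>x\<in>feas lo hi a \<beta>. 0 \<le> inner gb (x - zb)" using stationary r zr by blast
    have "f zb \<le> f x" if "x \<in> feas lo hi a \<beta>" for x
      using semiconvex_stationary_imp_le[OF sc _ _ gb] zb that vi by (auto simp: feas_def)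
    thus ?thesis using zb by (auto intro: cInf_eq_minimum[symmetric])
  qed
  have cont: "isCont f zb" if "zb \<in> feas lo hi a \<beta>" for zb
    using f_lipschitz that isCont_if_lipschitz_on_ball by (fastforce simp: feas_def)
  have "(\<lambda>l. f (z l)) \<longlonglongrightarrow> (INF x\<in>feas lo hi a \<beta>. f x)" if "semiconvex_on f (boxset lo hi)"
    using tendsto_of_subseq_limits[OF bdd] optimal[OF that] cont by blast
  thus ?thesis using bounded_imp_convergent_subsequence[OF bdd] stationary optimal by blast
qed

theorem theorem4p1:
  fixes lo hi a :: "real^'n" and \<beta> :: real
    and f :: "real^'n \<Rightarrow> real"
    and alo ahi av :: "nat \<Rightarrow> real^'n" and bl :: "nat \<Rightarrow> real"
    and fl :: "nat \<Rightarrow> real^'n \<Rightarrow> real" and G :: "nat \<Rightarrow> real^'n \<Rightarrow> real^'n"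
    and \<sigma> \<theta> :: real and \<delta> \<epsilon> :: "nat \<Rightarrow> real"
  assumes A1_D: "feas lo hi a \<beta> \<noteq> {}"
    and A1_X: "bounded (boxset lo hi)"
    and A1_a: "\<forall>i. a$i > 0"
    and A1_f: "\<forall>x\<in>boxset lo hi. \<exists>e>0. \<exists>L. L-lipschitz_on (ball x e) f"
    and A2_D: "\<forall>l. feas (alo l) (ahi l) (av l) (bl l) \<noteq> {}"
    and A2_a: "\<forall>l i. av l $ i > 0"
    and A2_box: "\<forall>l i. alo l $ i < ahi l $ i"
    and A2_lo: "alo \<longlonglongrightarrow> lo" and A2_hi: "ahi \<longlonglongrightarrow> hi"
    and A2_av: "av \<longlonglongrightarrow> a" and A2_b: "bl \<longlonglongrightarrow> \<beta>"
    and A3_C1: "\<forall>l. \<exists>U. open U \<and> boxset (alo l) (ahi l) \<subseteq> U \<and>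
                   (\<forall>x\<in>U. GDERIV (fl l) x :> G l x) \<and> continuous_on U (G l)"
    and A3_g: "\<forall>y yb. (\<forall>l. y l \<in> feas (alo l) (ahi l) (av l) (bl l)) \<and> y \<longlonglongrightarrow> yb \<longrightarrow>
                 (\<exists>gb\<in>clarke_subdiff f yb. (\<lambda>l. G l (y l)) \<longlonglongrightarrow> gb)"
    and sig: "0 < \<sigma>" "\<sigma> < 1" and th: "0 < \<theta>" "\<theta> < 1"
    and del: "\<forall>l. \<delta> l > 0" "decseq \<delta>" "\<delta> \<longlonglongrightarrow> 0"
    and eps: "\<forall>l. \<epsilon> l > 0" "decseq \<epsilon>" "\<epsilon> \<longlonglongrightarrow> 0"
  shows
    "(\<forall>l\<ge>1. \<forall>y.
        let x0 = closest_point (feas (alo l) (ahi l) (av l) (bl l)) y;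
            step = bcv_step (alo l) (ahi l) (av l) (fl l) (G l) (\<epsilon> l) (\<delta> l) \<sigma> \<theta>
        in (\<not> (\<exists>s. s 0 = x0 \<and> (\<forall>k. step (s k) (s (Suc k))))) \<and>
           (\<forall>x. step\<^sup>*\<^sup>* x0 x \<and> \<not> bcv_stop (alo l) (ahi l) (av l) (G l) (\<epsilon> l) (\<delta> l) x
                  \<longrightarrow> (\<exists>x'. step x x')))
     \<and>
     (\<forall>z. z 0 \<in> feas (alo 0) (ahi 0) (av 0) (bl 0) \<and>
          (\<forall>l\<ge>1. (bcv_step (alo l) (ahi l) (av l) (fl l) (G l) (\<epsilon> l) (\<delta> l) \<sigma> \<theta>)\<^sup>*\<^sup>*
                     (closest_point (feas (alo l) (ahi l) (av l) (bl l)) (z (l - 1))) (z l) \<and>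
                   bcv_stop (alo l) (ahi l) (av l) (G l) (\<epsilon> l) (\<delta> l) (z l))
        \<longrightarrow>
        (\<exists>zb r. strict_mono r \<and> (z \<circ> r) \<longlonglongrightarrow> zb) \<and>
        (\<forall>zb r. strict_mono r \<and> (z \<circ> r) \<longlonglongrightarrow> zb \<longrightarrow>
            zb \<in> feas lo hi a \<beta> \<and>
            (\<exists>gb\<in>clarke_subdiff f zb. \<forall>x\<in>feas lo hi a \<beta>. inner gb (x - zb) \<ge> 0)) \<and>
        (semiconvex_on f (boxset lo hi) \<longrightarrow>
            (\<lambda>l. f (z l)) \<longlonglongrightarrow> (INF x\<in>feas lo hi a \<beta>. f x) \<and>
            (\<forall>zb r. strict_mono r \<and> (z \<circ> r) \<longlonglongrightarrow> zb \<longrightarrow>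
               zb \<in> feas lo hi a \<beta> \<and> f zb = (INF x\<in>feas lo hi a \<beta>. f x))))"
proof -
  obtain U where stage: "\<And>l. bcv_stage (alo l) (ahi l) (av l) (fl l) (G l) (\<epsilon> l) (\<delta> l) \<sigma> \<theta> (U l)"
    using A3_C1 A2_a sig th del(1) eps(1) unfolding bcv_stage_def boxset_eq_cbox by metis
  have proj: "closest_point (feas (alo l) (ahi l) (av l) (bl l)) y \<in> feas (alo l) (ahi l) (av l) (bl l)" for l y
    using A2_D compact_feas by (intro closest_point_in_set compact_imp_closed) auto
  have iterates_feasible: "z l \<in> feas (alo l) (ahi l) (av l) (bl l)"
    if "z 0 \<in> feas (alo 0) (ahi 0) (av 0) (bl 0)"
      "\<forall>l\<ge>1. (bcv_step (alo l) (ahi l) (av l) (fl l) (G l) (\<epsilon> l) (\<delta> l) \<sigma> \<theta>)\<^sup>*\<^sup>*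
         (closest_point (feas (alo l) (ahi l) (av l) (bl l)) (z (l - 1))) (z l)" for z l
    using that bcv_stage.steps_in_feas[OF stage _ proj] by (cases l) auto
  show ?thesis
    unfolding Let_def
    using bcv_stage.stage_terminates[OF stage proj]
      bcv_outer_limit_points[OF A1_a A2_a A1_f A2_D A2_lo A2_hi A2_av A2_b eps(3) del(3) A3_g]
      iterates_feasible
    by blast
qed

end
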